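(* Let $\mathcal K$ be a finite-dimensional complex Hilbert space and let $U$ be a unitary on $\mathbb C^2\otimes\mathcal K$. Define $K=(\langle0|\otimes I)\,U\,(|0\rangle\otimes I)$, so that $U(|0\rangle\otimes|\varphi\rangle)=|0\rangle\otimes K|\varphi\rangle+|1\rangle\otimes|\mathrm{junk}_\varphi\rangle$ for every $|\varphi\rangle\in\mathcal K$. Suppose $K$ is an orthogonal projector. Let $\tilde U$ be any unitary on $\mathbb C^2\otimes\mathcal K$, let $K'=(\langle0|\otimes I)\,\tilde U\,(|0\rangle\otimes I)$, and suppose that $\tilde U$ preserves the action of $K$ up to a scalar, i.e. for every $|\varphi\rangle\in\mathcal K$ there is a scalar $\lambda(\varphi)\in\mathbb C$ with $K'|\varphi\rangle=\lambda(\varphi)K|\varphi\rangle$. Then for every $|\varphi\rangle\in\mathcal K$, $\|K'|\varphi\rangle\|^2\le\|K|\varphi\rangle\|^2$; that is, the success probability of post-selecting the ancilla in $|0\rangle$ cannot be increased.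
   Context: $\|K|\varphi\rangle\|^2$ is the probability of obtaining outcome $0$ when measuring the ancilla (first tensor factor) after applying $U$ to $|0\rangle\otimes|\varphi\rangle$ for a normalized $|\varphi\rangle$; $\tilde U$ models an (oblivious) amplitude amplification protocol. *)

theory Defs
  imports "HOL-Analysis.Analysis"
begin

text \<open>Finite-dimensional complex Hilbert space K = complex ^ 'n (standard inner product);
  C^2 \<otimes> K = complex ^ (2 \<times> 'n), basis vector |a> \<otimes> |i> indexed by (a,i), a :: 2.
  Operators are square matrices acting by *v.\<close>

definition cadj :: "complex ^ 'm ^ 'k \<Rightarrow> complex ^ 'k ^ 'm" where
  "cadj A = (\<chi> i j. cnj (A $ j $ i))"

definition unitary_mat :: "complex ^ 'k ^ 'k \<Rightarrow> bool" where
  "unitary_mat U \<longleftrightarrow> U ** cadj U = mat 1 \<and> cadj U ** U = mat 1"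

definition orth_projector :: "complex ^ 'k ^ 'k \<Rightarrow> bool" where
  "orth_projector P \<longleftrightarrow> P ** P = P \<and> cadj P = P"

definition anc0_block :: "complex ^ (2 \<times> 'n) ^ (2 \<times> 'n) \<Rightarrow> complex ^ 'n ^ 'n" where
  "anc0_block U = (\<chi> i j. U $ (0, i) $ (0, j))"

end

theory Submission imports Defs begin

text \<open>The block \<open>K'\<close> of \<open>\<tilde>U\<close> is a scalar multiple of the projector \<open>K\<close> on every vector,
  so it vanishes on \<open>ker K\<close>, and hence \<open>K' \<phi> = K' (K \<phi>)\<close>. Every block
  \<open>(\<langle>0| \<otimes> I) V (|0\<rangle> \<otimes> I)\<close> of a unitary \<open>V\<close> is a contraction, since \<open>V\<close> preserves the norm
  and dropping the \<open>|1\<rangle>\<close> components can only decrease it. Therefore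
  \<open>\<parallel>K' \<phi>\<parallel> = \<parallel>K' (K \<phi>)\<parallel> \<le> \<parallel>K \<phi>\<parallel>\<close>.\<close>

lemma power2_norm_vec:
  fixes x :: "'a::real_normed_vector ^ 'k"
  shows "(norm x)\<^sup>2 = (\<Sum>i\<in>UNIV. (norm (x $ i))\<^sup>2)"
  by (simp add: norm_vec_def L2_set_def sum_nonneg)

lemma sum_UNIV_pair:
  fixes f :: "'a::finite \<times> 'b::finite \<Rightarrow> 'c::comm_monoid_add"
  shows "(\<Sum>p\<in>UNIV. f p) = (\<Sum>a\<in>UNIV. \<Sum>i\<in>UNIV. f (a, i))"
  by (simp add: UNIV_Times_UNIV[symmetric] sum.cartesian_product del: UNIV_Times_UNIV)

lemma of_real_power2_norm_vec:
  fixes y :: "complex ^ 'k"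
  shows "complex_of_real ((norm y)\<^sup>2) = (\<Sum>i\<in>UNIV. y $ i * cnj (y $ i))"
  by (simp only: power2_norm_vec of_real_sum complex_norm_square)

lemma unitary_mat_norm_preserving:
  fixes U :: "complex ^ 'k ^ 'k"
  assumes "unitary_mat U"
  shows "norm (U *v x) = norm x"
proof -
  have columns_orthonormal:
    "(\<Sum>i\<in>UNIV. cnj (U $ i $ l) * U $ i $ j) = (if l = j then 1 else 0)" for l j
  proof -
    have "(cadj U ** U) $ l $ j = (mat 1 :: complex ^ 'k ^ 'k) $ l $ j"
      using assms unfolding unitary_mat_def by simp
    then show ?thesis by (simp add: matrix_matrix_mult_def cadj_def mat_def)
  qed
  have "(\<Sum>i\<in>UNIV. (U *v x) $ i * cnj ((U *v x) $ i))
      = (\<Sum>i\<in>UNIV. \<Sum>j\<in>UNIV. \<Sum>l\<in>UNIV. (U $ i $ j * x $ j) * (cnj (U $ i $ l) * cnj (x $ l)))"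
    by (simp add: matrix_vector_mult_def sum_product)
  also have "\<dots> = (\<Sum>j\<in>UNIV. \<Sum>l\<in>UNIV. \<Sum>i\<in>UNIV. (U $ i $ j * x $ j) * (cnj (U $ i $ l) * cnj (x $ l)))"
    by (subst sum.swap, rule sum.cong, simp, rule sum.swap)
  also have "\<dots> = (\<Sum>j\<in>UNIV. \<Sum>l\<in>UNIV. (x $ j * cnj (x $ l)) * (\<Sum>i\<in>UNIV. cnj (U $ i $ l) * U $ i $ j))"
    by (simp add: sum_distrib_left mult_ac)
  also have "\<dots> = (\<Sum>j\<in>UNIV. x $ j * cnj (x $ j))"
    by (simp add: columns_orthonormal if_distrib cong: if_cong)
  finally have "complex_of_real ((norm (U *v x))\<^sup>2) = complex_of_real ((norm x)\<^sup>2)"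
    by (simp only: of_real_power2_norm_vec)
  then have "(norm (U *v x))\<^sup>2 = (norm x)\<^sup>2"
    by (simp only: of_real_eq_iff)
  then show ?thesis
    by (simp add: power2_eq_iff_nonneg)
qed

definition ket0_tensor :: "'a::zero ^ 'n \<Rightarrow> 'a ^ (2 \<times> 'n)" where
  "ket0_tensor \<psi> = (\<chi> p. if fst p = 0 then \<psi> $ snd p else 0)"

definition anc0_part :: "'a ^ (2 \<times> 'n) \<Rightarrow> 'a ^ 'n" where
  "anc0_part x = (\<chi> i. x $ (0, i))"

lemma anc0_block_mult_vec:
  "anc0_block U *v \<psi> = anc0_part (U *v ket0_tensor \<psi>)"
proof -
  have "(U *v ket0_tensor \<psi>) $ (0, i) = (\<Sum>j\<in>UNIV. U $ (0, i) $ (0, j) * \<psi> $ j)" for i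
  proof -
    have "(U *v ket0_tensor \<psi>) $ (0, i)
        = (\<Sum>a\<in>UNIV. \<Sum>j\<in>UNIV. U $ (0, i) $ (a, j) * ket0_tensor \<psi> $ (a, j))"
      by (simp add: matrix_vector_mult_def sum_UNIV_pair)
    also have "\<dots> = (\<Sum>a\<in>UNIV. if (a::2) = 0 then (\<Sum>j\<in>UNIV. U $ (0, i) $ (0, j) * \<psi> $ j) else 0)"
      by (rule sum.cong[OF refl]) (auto simp: ket0_tensor_def)
    finally show ?thesis by simp
  qed
  then show ?thesis
    by (simp add: vec_eq_iff matrix_vector_mult_def anc0_block_def anc0_part_def)
qed

lemma norm_ket0_tensor: "norm (ket0_tensor \<psi>) = norm \<psi>"
proof -
  have "(norm (ket0_tensor \<psi>))\<^sup>2 = (\<Sum>a\<in>UNIV. \<Sum>j\<in>UNIV. (norm (ket0_tensor \<psi> $ (a, j)))\<^sup>2)"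
    by (simp add: power2_norm_vec sum_UNIV_pair)
  also have "\<dots> = (\<Sum>a\<in>UNIV. if (a::2) = 0 then (\<Sum>j\<in>UNIV. (norm (\<psi> $ j))\<^sup>2) else 0)"
    by (rule sum.cong[OF refl]) (auto simp: ket0_tensor_def)
  also have "\<dots> = (norm \<psi>)\<^sup>2"
    by (simp add: power2_norm_vec)
  finally show ?thesis
    by (simp add: power2_eq_iff_nonneg)
qed

lemma norm_anc0_part_le:
  fixes x :: "'a::real_normed_vector ^ (2 \<times> 'n::finite)"
  shows "norm (anc0_part x) \<le> norm x"
proof -
  have "(norm (anc0_part x))\<^sup>2 = (\<Sum>j\<in>UNIV. (norm (x $ (0, j)))\<^sup>2)"
    by (simp add: power2_norm_vec anc0_part_def)
  also have "\<dots> \<le> (\<Sum>a\<in>UNIV. \<Sum>j\<in>UNIV. (norm (x $ (a, j)))\<^sup>2)"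
    by (rule member_le_sum) (auto intro: sum_nonneg)
  also have "\<dots> = (norm x)\<^sup>2"
    by (simp add: power2_norm_vec sum_UNIV_pair)
  finally show ?thesis
    using power2_le_imp_le by force
qed

lemma anc0_block_contraction:
  assumes "unitary_mat U"
  shows "norm (anc0_block U *v \<psi>) \<le> norm \<psi>"
  using norm_anc0_part_le[of "U *v ket0_tensor \<psi>"]
  by (simp add: anc0_block_mult_vec unitary_mat_norm_preserving[OF assms] norm_ket0_tensor)

lemma mult_vec_factors_through_idempotent:
  fixes P Q :: "'a::field ^ 'k ^ 'k"
  assumes "P ** P = P"
    and "\<And>\<phi>. \<exists>c. Q *v \<phi> = c *s (P *v \<phi>)"
  shows "Q *v \<phi> = Q *v (P *v \<phi>)"
proof -
  have "P *v (\<phi> - P *v \<phi>) = 0"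
    by (simp add: matrix_vector_mult_diff_distrib matrix_vector_mul_assoc assms(1))
  moreover obtain c where "Q *v (\<phi> - P *v \<phi>) = c *s (P *v (\<phi> - P *v \<phi>))"
    using assms(2) by blast
  ultimately have "Q *v (\<phi> - P *v \<phi>) = 0"
    by simp
  then show ?thesis
    by (simp add: matrix_vector_mult_diff_distrib)
qed

theorem lemma1:
  fixes U Ut :: "complex ^ (2 \<times> 'n::finite) ^ (2 \<times> 'n)"
  assumes "unitary_mat U"
    and "orth_projector (anc0_block U)"
    and "unitary_mat Ut"
    and "\<forall>\<phi> :: complex ^ 'n. \<exists>c :: complex.
           anc0_block Ut *v \<phi> = c *s (anc0_block U *v \<phi>)"
  shows "\<forall>\<phi> :: complex ^ 'n.
           (norm (anc0_block Ut *v \<phi>))\<^sup>2 \<le> (norm (anc0_block U *v \<phi>))\<^sup>2"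
proof
  fix \<phi> :: "complex ^ 'n"
  have "anc0_block Ut *v \<phi> = anc0_block Ut *v (anc0_block U *v \<phi>)"
    using assms(2,4) unfolding orth_projector_def
    by (intro mult_vec_factors_through_idempotent) auto
  also have "norm \<dots> \<le> norm (anc0_block U *v \<phi>)"
    by (rule anc0_block_contraction[OF assms(3)])
  finally show "(norm (anc0_block Ut *v \<phi>))\<^sup>2 \<le> (norm (anc0_block U *v \<phi>))\<^sup>2"
    by (simp add: power_mono)
qed

end
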